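(* Let $L$ be an operator of order $n>0$ in normal form in $A_1(\mathbf{C})$, and consider its test-filtration $\delta_{p,q}$. Assume that the symbol $\sigma(L)\in\mathbf{C}[\chi,\xi]$ is a power of an irreducible polynomial $g\in\mathbf{C}[\chi,\xi]$. Then for every nonzero $M$ in the centralizer $\mathcal{C}(L)=\{M\in A_1(\mathbf{C}):[L,M]=0\}$, the symbol $\sigma(M)$ is (a nonzero constant multiple of) a power of $g$.
   Context: $A_1(\mathbf{C})$ is the first Weyl algebra of operators $P=\sum a_{ij}x^i\partial^j$, $[\partial,x]=1$; normal form means $P=\partial^n+u_{n-2}\partial^{n-2}+\dots+u_0$. Newton diagram $\mathcal{N}(P)=\{(i,j):a_{ij}\neq0\}$. For nonnegative integers $p,q$, $p+q>0$, $\Lambda_{p,q}(i,j)=pi+qj$, $\delta_{p,q}(P)=\max_{(i,j)\in\mathcal{N}(P)}\Lambda_{p,q}(i,j)$, and the symbol of $P$ is the polynomial $\sigma(P)=\sum_{\Lambda_{p,q}(i,j)=\delta_{p,q}(P)}a_{ij}\chi^i\xi^j\in\mathbf{C}[\chi,\xi]$. The test-filtration for $L\neq\partial^n$ is the $\delta_{p,q}$ for the (up to scaling unique) linear form with $\delta_{p,q}(L)=\Lambda_{p,q}(0,n)=\Lambda_{p,q}(a,b)$ for some $(a,b)\in\mathcal{N}(L)\setminus\{(0,n)\}$. *)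

theory Defs
  imports "HOL-Computational_Algebra.Polynomial_Factorial"
begin

text \<open>An element of the first Weyl algebra A_1(C) is represented by its
coefficient function: P = sum a(i,j) x^i d^j (normally ordered, x to the left),
with a(i,j) = P (i,j); elements are required to have finite support.\<close>

type_synonym weyl = "nat \<times> nat \<Rightarrow> complex"

definition newton :: "weyl \<Rightarrow> (nat \<times> nat) set" where
  "newton P = {ij. P ij \<noteq> 0}"

definition is_weyl :: "weyl \<Rightarrow> bool" where
  "is_weyl P \<longleftrightarrow> finite (newton P)"

text \<open>Product in A_1 using  d^j x^k = sum_t C(j,t) C(k,t) t! x^(k-t) d^(j-t).\<close>
definition weyl_mult :: "weyl \<Rightarrow> weyl \<Rightarrow> weyl" where
  "weyl_mult P Q = (\<lambda>(a, b).
     \<Sum>(i, j)\<in>newton P. \<Sum>(k, l)\<in>newton Q. \<Sum>t\<in>{..min j k}.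
       (if i + k - t = a \<and> j + l - t = b
        then P (i, j) * Q (k, l) * of_nat ((j choose t) * (k choose t) * fact t)
        else 0))"

definition dpow :: "nat \<Rightarrow> weyl" where
  "dpow n = (\<lambda>ij. if ij = (0, n) then 1 else 0)"

text \<open>Normal form of order n: P = d^n + u_(n-2) d^(n-2) + ... + u_0, u_k in C[x].\<close>
definition normal_form :: "nat \<Rightarrow> weyl \<Rightarrow> bool" where
  "normal_form n P \<longleftrightarrow> is_weyl P \<and> P (0, n) = 1 \<and>
     (\<forall>i j. (j > n \<or> (j = n \<and> i > 0) \<or> Suc j = n) \<longrightarrow> P (i, j) = 0)"

definition Lam :: "nat \<Rightarrow> nat \<Rightarrow> nat \<times> nat \<Rightarrow> nat" where
  "Lam p q ij = p * fst ij + q * snd ij"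

definition delta :: "nat \<Rightarrow> nat \<Rightarrow> weyl \<Rightarrow> nat" where
  "delta p q P = Max (Lam p q ` newton P)"

definition test_filtration :: "nat \<Rightarrow> weyl \<Rightarrow> nat \<Rightarrow> nat \<Rightarrow> bool" where
  "test_filtration n L p q \<longleftrightarrow> p + q > 0 \<and>
     delta p q L = Lam p q (0, n) \<and>
     (\<exists>ab \<in> newton L - {(0, n)}. Lam p q ab = delta p q L)"

text \<open>Bivariate polynomials C[chi, xi] are represented as complex poly poly:
outer variable xi, inner variable chi.\<close>
definition symbol :: "nat \<Rightarrow> nat \<Rightarrow> weyl \<Rightarrow> complex poly poly" where
  "symbol p q P = (\<Sum>(i, j)\<in>{ij \<in> newton P. Lam p q ij = delta p q P}.
       monom (monom (P (i, j)) i) j)"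

definition centralizer :: "weyl \<Rightarrow> weyl set" where
  "centralizer L = {M. is_weyl M \<and> weyl_mult L M = weyl_mult M L}"

end

theory Submission
  imports Defs "HOL-Computational_Algebra.Fundamental_Theorem_Algebra"
    "HOL-Computational_Algebra.Field_as_Ring"
begin

text \<open>Write f and h for the symbols of L and M. Both are (p,q)-weighted homogeneous, so
they satisfy Euler identities with eigenvalues a = delta(L) and b = delta(M); and since
[L,M] = 0, the first correction term of the commutator, the Poisson bracket {f,h}, vanishes.
Together these give a f Dh = b h Df for both partial derivatives D. If f = g^m and
h = g^k u with g not dividing u, this forces (b m - a k) u g_xi to be divisible by g; as g
cannot divide its own xi-derivative, a k = b m, and then u has vanishing derivatives, i.e.
is a constant. The degenerate filtration q = 0 cannot occur: there f is a polynomial in xi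
alone, hence a power of a linear form xi - z, and the normal form (no xi^(n-1) term) forces
f = xi^n, leaving no second point of the Newton diagram on the face.\<close>

section \<open>Weights and the top coefficients of a product\<close>

lemma Lam_le_delta: "is_weyl P \<Longrightarrow> ij \<in> newton P \<Longrightarrow> Lam p q ij \<le> delta p q P"
  unfolding delta_def is_weyl_def by (rule Max_ge) auto

lemma Lam_add_shift:
  assumes "i + k = a + t" "j + l = b + t"
  shows "Lam p q (i, j) + Lam p q (k, l) = Lam p q (a, b) + (p + q) * t"
proof -
  have "p * (i + k) + q * (j + l) = p * (a + t) + q * (b + t)"
    using assms by simp
  then show ?thesis
    by (simp add: Lam_def algebra_simps)
qed

text \<open>A term with t contractions in the normal ordering of x^i d^j x^k d^l loses weight
(p + q) t, so near the top weight only t = 0 and t = 1 contribute.\<close>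

lemma normal_ordering_sum_top:
  fixes c :: complex
  assumes pq: "p + q > 0"
    and weight: "Lam p q (i, j) + Lam p q (k, l) \<le> Lam p q (a, b) + (p + q)"
  shows "(\<Sum>t\<in>{..min j k}. if i + k - t = a \<and> j + l - t = b
           then c * of_nat ((j choose t) * (k choose t) * fact t) else 0)
       = (if i + k = a \<and> j + l = b then c else 0)
         + (if i + k = Suc a \<and> j + l = Suc b then c * of_nat (j * k) else 0)"
proof -
  define F where "F t = (if i + k - t = a \<and> j + l - t = b
    then c * of_nat ((j choose t) * (k choose t) * fact t) else 0)" for t
  have vanish: "F t = 0" if "t \<le> min j k" "2 \<le> t" for t
  proof (rule ccontr)
    assume "F t \<noteq> 0"
    then have "i + k - t = a" "j + l - t = b"
      unfolding F_def by (auto split: if_splits)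
    with that have "i + k = a + t" "j + l = b + t"
      by auto
    then have "(p + q) * t \<le> (p + q) * 1"
      using weight Lam_add_shift[of i k a t j l b p q] by simp
    with pq that show False
      by simp
  qed
  have "(\<Sum>t\<in>{..min j k}. F t) = (\<Sum>t\<in>{..min j k} \<inter> {..1}. F t)"
    by (rule sum.mono_neutral_right) (auto intro: vanish)
  also have "\<dots> = F 0 + (if min j k = 0 then 0 else F 1)"
    by (cases "min j k = 0") (auto simp: Int_absorb1 atMost_Suc)
  also have "\<dots> = (if i + k = a \<and> j + l = b then c else 0)
         + (if i + k = Suc a \<and> j + l = Suc b then c * of_nat (j * k) else 0)"
    by (auto simp: F_def)
  finally show ?thesis
    unfolding F_def .
qed

lemma weyl_mult_top_coeff:
  assumes wP: "is_weyl P" and wQ: "is_weyl Q" and pq: "p + q > 0"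
    and ab: "Lam p q (a, b) + (p + q) = delta p q P + delta p q Q"
  shows "weyl_mult P Q (a, b) = (\<Sum>(i, j)\<in>newton P. \<Sum>(k, l)\<in>newton Q.
     (if i + k = a \<and> j + l = b then P (i, j) * Q (k, l) else 0) +
     (if i + k = Suc a \<and> j + l = Suc b then P (i, j) * Q (k, l) * of_nat (j * k) else 0))"
  unfolding weyl_mult_def split
proof (rule sum.cong[OF refl], clarify, rule sum.cong[OF refl], clarify)
  fix i j k l
  assume "(i, j) \<in> newton P" "(k, l) \<in> newton Q"
  then have "Lam p q (i, j) + Lam p q (k, l) \<le> Lam p q (a, b) + (p + q)"
    using Lam_le_delta[OF wP] Lam_le_delta[OF wQ] ab by (metis add_mono)
  from normal_ordering_sum_top[OF pq this]
  show "(\<Sum>t\<in>{..min j k}. if i + k - t = a \<and> j + l - t = b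
          then P (i, j) * Q (k, l) * of_nat ((j choose t) * (k choose t) * fact t) else 0) =
        (if i + k = a \<and> j + l = b then P (i, j) * Q (k, l) else 0) +
        (if i + k = Suc a \<and> j + l = Suc b then P (i, j) * Q (k, l) * of_nat (j * k) else 0)" .
qed

definition newton_face :: "nat \<Rightarrow> nat \<Rightarrow> weyl \<Rightarrow> (nat \<times> nat) set" where
  "newton_face p q P = {ij \<in> newton P. Lam p q ij = delta p q P}"

lemma finite_newton_face: "is_weyl P \<Longrightarrow> finite (newton_face p q P)"
  by (auto simp: is_weyl_def newton_face_def)

lemma sum_subtop_newton_face:
  assumes wP: "is_weyl P" and wQ: "is_weyl Q"
    and ab: "Lam p q (a, b) + (p + q) = delta p q P + delta p q Q"
  shows "(\<Sum>(i, j)\<in>newton P. \<Sum>(k, l)\<in>newton Q.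
           if i + k = Suc a \<and> j + l = Suc b then P (i, j) * Q (k, l) * w i j k l else 0)
       = (\<Sum>(i, j)\<in>newton_face p q P. \<Sum>(k, l)\<in>newton_face p q Q.
           if i + k = Suc a \<and> j + l = Suc b then P (i, j) * Q (k, l) * w i j k l else (0::complex))"
proof -
  define S where "S i j k l = (if i + k = Suc a \<and> j + l = Suc b
    then P (i, j) * Q (k, l) * w i j k l else (0::complex))" for i j k l
  have fP: "finite (newton P)" and fQ: "finite (newton Q)"
    using wP wQ by (auto simp: is_weyl_def)
  have off_face: "S i j k l = 0"
    if "(i, j) \<in> newton P" "(k, l) \<in> newton Q"
      "(i, j) \<notin> newton_face p q P \<or> (k, l) \<notin> newton_face p q Q" for i j k l
  proof (rule ccontr)
    assume "S i j k l \<noteq> 0"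
    then have "i + k = Suc a" "j + l = Suc b"
      by (auto simp: S_def split: if_splits)
    then show False
      using Lam_le_delta[OF wP that(1), of p q] Lam_le_delta[OF wQ that(2), of p q] ab that
        Lam_add_shift[of i k a 1 j l b p q]
      by (auto simp: newton_face_def)
  qed
  have "(\<Sum>(i, j)\<in>newton P. \<Sum>(k, l)\<in>newton Q. S i j k l)
      = (\<Sum>(i, j)\<in>newton_face p q P. \<Sum>(k, l)\<in>newton Q. S i j k l)"
    by (rule sum.mono_neutral_right[OF fP])
      (auto simp: newton_face_def intro!: sum.neutral off_face)
  also have "\<dots> = (\<Sum>(i, j)\<in>newton_face p q P. \<Sum>(k, l)\<in>newton_face p q Q. S i j k l)"
  proof (rule sum.cong[OF refl], clarify)
    fix i j
    assume "(i, j) \<in> newton_face p q P"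
    then show "(\<Sum>(k, l)\<in>newton Q. S i j k l) = (\<Sum>(k, l)\<in>newton_face p q Q. S i j k l)"
      by (intro sum.mono_neutral_right[OF fQ])
        (auto simp: newton_face_def intro!: off_face)
  qed
  finally show ?thesis
    unfolding S_def .
qed

text \<open>One weight below the top, the uncontracted terms of LM and ML coincide, so [L,M] = 0
equates the single-contraction terms: coefficientwise, the Poisson bracket of the symbols
vanishes.\<close>

lemma commuting_subtop_coeff:
  assumes wL: "is_weyl L" and wM: "is_weyl M" and pq: "p + q > 0"
    and comm: "weyl_mult L M = weyl_mult M L"
  shows "(\<Sum>(i, j)\<in>newton_face p q L. \<Sum>(k, l)\<in>newton_face p q M.
           if i + k = Suc a \<and> j + l = Suc b then L (i, j) * M (k, l) * of_nat (j * k) else 0)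
       = (\<Sum>(i, j)\<in>newton_face p q L. \<Sum>(k, l)\<in>newton_face p q M.
           if i + k = Suc a \<and> j + l = Suc b then L (i, j) * M (k, l) * of_nat (i * l) else 0)"
proof (cases "Lam p q (a, b) + (p + q) = delta p q L + delta p q M")
  case True
  define A0 where "A0 i j k l = (if i + k = a \<and> j + l = b then L (i, j) * M (k, l) else 0)"
    for i j k l
  define A1 where "A1 i j k l = (if i + k = Suc a \<and> j + l = Suc b
    then L (i, j) * M (k, l) * of_nat (j * k) else 0)" for i j k l
  define B1 where "B1 i j k l = (if i + k = Suc a \<and> j + l = Suc b
    then L (i, j) * M (k, l) * of_nat (i * l) else 0)" for i j k l
  have "weyl_mult L M (a, b) = (\<Sum>(i, j)\<in>newton L. \<Sum>(k, l)\<in>newton M. A0 i j k l + A1 i j k l)"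
    unfolding A0_def A1_def by (rule weyl_mult_top_coeff[OF wL wM pq True])
  moreover have "weyl_mult M L (a, b) = (\<Sum>(k, l)\<in>newton M. \<Sum>(i, j)\<in>newton L. A0 i j k l + B1 i j k l)"
    unfolding weyl_mult_top_coeff[OF wM wL pq True[unfolded add.commute[of "delta p q L"]]]
      A0_def B1_def
    by (rule sum.cong[OF refl], clarify, rule sum.cong[OF refl], clarify) (auto simp: ac_simps)
  moreover have "\<dots> = (\<Sum>(i, j)\<in>newton L. \<Sum>(k, l)\<in>newton M. A0 i j k l + B1 i j k l)"
    unfolding split_def by (rule sum.swap)
  ultimately have "(\<Sum>(i, j)\<in>newton L. \<Sum>(k, l)\<in>newton M. A1 i j k l)
                 = (\<Sum>(i, j)\<in>newton L. \<Sum>(k, l)\<in>newton M. B1 i j k l)"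
    using comm unfolding split_def by (simp add: sum.distrib)
  then show ?thesis
    unfolding A1_def B1_def sum_subtop_newton_face[OF wL wM True] .
next
  case False
  have "(\<Sum>(i, j)\<in>newton_face p q L. \<Sum>(k, l)\<in>newton_face p q M.
          if i + k = Suc a \<and> j + l = Suc b then L (i, j) * M (k, l) * w i j k l else 0) = 0" for w
  proof (rule sum.neutral, clarify, rule sum.neutral, clarify)
    fix i j k l
    assume "(i, j) \<in> newton_face p q L" "(k, l) \<in> newton_face p q M"
    with False Lam_add_shift[of i k a 1 j l b p q]
    show "(if i + k = Suc a \<and> j + l = Suc b then L (i, j) * M (k, l) * w i j k l else 0) = 0"
      by (auto simp: newton_face_def)
  qed
  then show ?thesis
    by simp
qed

section \<open>Bivariate polynomials\<close>

text \<open>As in the definition of the symbol, the inner variable of 'a poly poly is chi and the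
outer one is xi: the xi-derivative is pderiv, the chi-derivative acts on coefficients.\<close>

definition pderiv_chi :: "'a::idom poly poly \<Rightarrow> 'a poly poly" where
  "pderiv_chi F = map_poly pderiv F"

definition coeff2 :: "'a::zero poly poly \<Rightarrow> nat \<Rightarrow> nat \<Rightarrow> 'a" where
  "coeff2 F i j = coeff (coeff F j) i"

definition monom2 :: "'a::zero \<Rightarrow> nat \<Rightarrow> nat \<Rightarrow> 'a poly poly" where
  "monom2 c i j = monom (monom c i) j"

definition poly_chi :: "'a::comm_semiring_1 poly poly" where
  "poly_chi = [:[:0, 1:]:]"

definition poly_xi :: "'a::comm_semiring_1 poly poly" where
  "poly_xi = [:0, 1:]"

lemma coeff_pderiv_chi: "coeff (pderiv_chi F) j = pderiv (coeff F j)"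
  by (simp add: pderiv_chi_def coeff_map_poly)

lemma pderiv_sum: "pderiv (sum f A) = (\<Sum>x\<in>A. pderiv (f x))"
  using higher_pderiv_sum[of 1 f A] by simp

lemma pderiv_chi_mult: "pderiv_chi (F * G) = pderiv_chi F * G + F * pderiv_chi G"
proof (rule poly_eqI)
  fix n
  have "coeff (pderiv_chi (F * G)) n
      = (\<Sum>i\<le>n. coeff F i * pderiv (coeff G (n - i)) + pderiv (coeff F i) * coeff G (n - i))"
    by (simp add: coeff_pderiv_chi coeff_mult pderiv_sum pderiv_mult mult.commute)
  also have "\<dots> = coeff (pderiv_chi F * G + F * pderiv_chi G) n"
    by (simp only: coeff_add coeff_mult coeff_pderiv_chi sum.distrib add.commute)
  finally show "coeff (pderiv_chi (F * G)) n = coeff (pderiv_chi F * G + F * pderiv_chi G) n" .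
qed

lemma pderiv_chi_sum: "pderiv_chi (sum f A) = (\<Sum>x\<in>A. pderiv_chi (f x))"
  by (rule poly_eqI) (simp add: coeff_pderiv_chi coeff_sum pderiv_sum)

lemma poly_eq_iff_coeff2: "F = G \<longleftrightarrow> (\<forall>i j. coeff2 F i j = coeff2 G i j)"
  unfolding coeff2_def by (auto intro: poly_eqI)

lemma coeff2_add [simp]: "coeff2 (F + G) i j = coeff2 F i j + coeff2 G i j"
  by (simp add: coeff2_def)

lemma coeff2_sum: "coeff2 (sum f A) i j = (\<Sum>x\<in>A. coeff2 (f x) i j)"
  by (simp add: coeff2_def coeff_sum)

lemma coeff2_of_nat_mult [simp]:
  "coeff2 (of_nat c * F) i j = of_nat c * coeff2 F i j"
  by (simp add: coeff2_def of_nat_mult_conv_smult)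

lemma coeff2_monom2 [simp]: "coeff2 (monom2 c a b) i j = (if a = i \<and> b = j then c else 0)"
  by (simp add: coeff2_def monom2_def coeff_monom)

lemma monom2_mult: "monom2 a i j * monom2 b k l = monom2 (a * b) (i + k) (j + l)"
  by (simp add: monom2_def mult_monom)

lemma pderiv_monom2: "pderiv (monom2 c i j) = monom2 (c * of_nat j) i (j - 1)"
proof -
  have "of_nat j * monom c i = monom (c * of_nat j) i"
    by (rule poly_eqI) (simp add: coeff_monom of_nat_poly mult_of_nat_commute)
  then show ?thesis
    by (simp add: monom2_def pderiv_monom)
qed

lemma pderiv_chi_monom2: "pderiv_chi (monom2 c i j) = monom2 (c * of_nat i) (i - 1) j"
  by (rule poly_eqI) (auto simp: coeff_pderiv_chi monom2_def coeff_monom pderiv_monom mult.commute)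

lemma coeff2_poly_chi_mult_pderiv_chi:
  "coeff2 (poly_chi * pderiv_chi F) i j = of_nat i * coeff2 F i j"
  by (cases i) (simp_all add: coeff2_def poly_chi_def coeff_pderiv_chi coeff_pderiv)

lemma coeff2_poly_xi_mult_pderiv:
  "coeff2 (poly_xi * pderiv F) i j = of_nat j * coeff2 F i j"
  by (cases j) (simp_all add: coeff2_def poly_xi_def coeff_pderiv of_nat_poly)

lemma coeff2_mult_sums:
  "coeff2 ((\<Sum>x\<in>A. f x) * (\<Sum>y\<in>B. g y)) i j = (\<Sum>x\<in>A. \<Sum>y\<in>B. coeff2 (f x * g y) i j)"
  by (simp add: sum_product coeff2_sum)

section \<open>Symbols: Euler identity and vanishing Poisson bracket\<close>

lemma symbol_eq_sum_newton_face:
  "symbol p q P = (\<Sum>(i, j)\<in>newton_face p q P. monom2 (P (i, j)) i j)"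
  unfolding symbol_def newton_face_def monom2_def ..

lemma coeff2_symbol:
  assumes "is_weyl P"
  shows "coeff2 (symbol p q P) i j = (if Lam p q (i, j) = delta p q P then P (i, j) else 0)"
proof -
  have "coeff2 (symbol p q P) i j = (\<Sum>x\<in>newton_face p q P. if x = (i, j) then P x else 0)"
    unfolding symbol_eq_sum_newton_face coeff2_sum by (rule sum.cong) (auto split: if_splits)
  also have "\<dots> = (if (i, j) \<in> newton_face p q P then P (i, j) else 0)"
    using finite_newton_face[OF assms] by (simp add: sum.delta)
  also have "\<dots> = (if Lam p q (i, j) = delta p q P then P (i, j) else 0)"
    by (auto simp: newton_face_def newton_def)
  finally show ?thesis .
qed

lemma symbol_euler:
  assumes "is_weyl P"
  shows "of_nat p * (poly_chi * pderiv_chi (symbol p q P)) + of_nat q * (poly_xi * pderiv (symbol p q P))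
       = of_nat (delta p q P) * symbol p q P"
proof (unfold poly_eq_iff_coeff2, intro allI)
  fix i j
  have "of_nat (Lam p q (i, j)) = (of_nat p * of_nat i + of_nat q * of_nat j :: complex)"
    by (simp add: Lam_def)
  then show "coeff2 (of_nat p * (poly_chi * pderiv_chi (symbol p q P))
                     + of_nat q * (poly_xi * pderiv (symbol p q P))) i j
           = coeff2 (of_nat (delta p q P) * symbol p q P) i j"
    unfolding coeff2_add coeff2_of_nat_mult coeff2_poly_chi_mult_pderiv_chi
      coeff2_poly_xi_mult_pderiv coeff2_symbol[OF assms]
    by (cases "Lam p q (i, j) = delta p q P") (simp_all add: algebra_simps)
qed

lemma pderiv_symbol:
  "pderiv (symbol p q P) = (\<Sum>(i, j)\<in>newton_face p q P. monom2 (P (i, j) * of_nat j) i (j - 1))"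
  unfolding symbol_eq_sum_newton_face pderiv_sum by (rule sum.cong) (auto simp: pderiv_monom2)

lemma pderiv_chi_symbol:
  "pderiv_chi (symbol p q P) = (\<Sum>(i, j)\<in>newton_face p q P. monom2 (P (i, j) * of_nat i) (i - 1) j)"
  unfolding symbol_eq_sum_newton_face pderiv_chi_sum by (rule sum.cong) (auto simp: pderiv_chi_monom2)

lemma coeff2_pderiv_mult_pderiv_chi_symbol:
  "coeff2 (pderiv (symbol p q L) * pderiv_chi (symbol p q M)) a b =
   (\<Sum>(i, j)\<in>newton_face p q L. \<Sum>(k, l)\<in>newton_face p q M.
      if i + k = Suc a \<and> j + l = Suc b then L (i, j) * M (k, l) * of_nat (j * k) else 0)"
  unfolding pderiv_symbol pderiv_chi_symbol coeff2_mult_sums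
  by (rule sum.cong[OF refl], clarify, rule sum.cong[OF refl], clarify)
    (cases "a = 0", auto simp: monom2_mult)

lemma coeff2_pderiv_chi_mult_pderiv_symbol:
  "coeff2 (pderiv_chi (symbol p q L) * pderiv (symbol p q M)) a b =
   (\<Sum>(i, j)\<in>newton_face p q L. \<Sum>(k, l)\<in>newton_face p q M.
      if i + k = Suc a \<and> j + l = Suc b then L (i, j) * M (k, l) * of_nat (i * l) else 0)"
  unfolding pderiv_symbol pderiv_chi_symbol coeff2_mult_sums
  by (rule sum.cong[OF refl], clarify, rule sum.cong[OF refl], clarify)
    (cases "a = 0", auto simp: monom2_mult)

lemma commuting_symbols_poisson_bracket:
  assumes "is_weyl L" "is_weyl M" "p + q > 0" "weyl_mult L M = weyl_mult M L"
  shows "pderiv (symbol p q L) * pderiv_chi (symbol p q M)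
       = pderiv_chi (symbol p q L) * pderiv (symbol p q M)"
  unfolding poly_eq_iff_coeff2 coeff2_pderiv_mult_pderiv_chi_symbol
    coeff2_pderiv_chi_mult_pderiv_symbol commuting_subtop_coeff[OF assms]
  by simp

section \<open>Derivations and weighted homogeneous polynomials\<close>

lemma derivation_power:
  fixes D :: "'a::comm_ring_1 \<Rightarrow> 'a"
  assumes leibniz: "\<And>x y. D (x * y) = D x * y + x * D y"
  shows "g * D (g ^ k) = of_nat k * g ^ k * D g"
proof (induction k)
  case 0
  have "D 1 = D 1 + D 1"
    using leibniz[of 1 1] by simp
  then show ?case
    by simp
next
  case (Suc k)
  have "g * D (g ^ Suc k) = g * g ^ k * D g + g * (g * D (g ^ k))"
    by (simp add: leibniz algebra_simps)
  also have "\<dots> = of_nat (Suc k) * g ^ Suc k * D g"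
    by (simp add: Suc algebra_simps)
  finally show ?case .
qed

lemma derivation_proportional_power:
  fixes D :: "'a::idom \<Rightarrow> 'a"
  assumes leibniz: "\<And>x y. D (x * y) = D x * y + x * D y"
    and proportional: "A * g ^ m * D h = B * h * D (g ^ m)"
    and h: "h = g ^ k * u" and "g \<noteq> 0"
  shows "A * g * D u + A * of_nat k * u * D g = B * of_nat m * u * D g"
proof -
  have "g * D h = of_nat k * g ^ k * D g * u + g ^ k * (g * D u)"
    using derivation_power[OF leibniz, of g k] by (simp add: h leibniz algebra_simps)
  moreover have "A * g ^ m * (g * D h) = B * h * (g * D (g ^ m))"
    using proportional by (metis mult.left_commute mult.assoc)
  ultimately have "(g ^ m * g ^ k) * (A * g * D u + A * of_nat k * u * D g)
                 = (g ^ m * g ^ k) * (B * of_nat m * u * D g)"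
    unfolding derivation_power[OF leibniz] by (simp add: h algebra_simps)
  with \<open>g \<noteq> 0\<close> show ?thesis
    by simp
qed

lemma euler_poisson_proportional:
  fixes D E :: "'a::comm_ring_1 \<Rightarrow> 'a"
  assumes euler_f: "P * (X * D f) + Q * (Y * E f) = A * f"
    and euler_h: "P * (X * D h) + Q * (Y * E h) = B * h"
    and poisson: "E f * D h = D f * E h"
  shows "A * f * D h = B * h * D f" and "A * f * E h = B * h * E f"
proof -
  have "A * f * D h = P * X * D f * D h + Q * Y * (E f * D h)"
    by (simp flip: euler_f add: algebra_simps)
  also have "\<dots> = P * X * D f * D h + Q * Y * (D f * E h)"
    by (simp only: poisson)
  also have "\<dots> = B * h * D f"
    by (simp flip: euler_h add: algebra_simps)
  finally show "A * f * D h = B * h * D f" .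
  have "A * f * E h = P * X * (D f * E h) + Q * Y * E f * E h"
    by (simp flip: euler_f add: algebra_simps)
  also have "\<dots> = P * X * (E f * D h) + Q * Y * E f * E h"
    by (simp only: poisson)
  also have "\<dots> = B * h * E f"
    by (simp flip: euler_h add: algebra_simps)
  finally show "A * f * E h = B * h * E f" .
qed

lemma is_unit_of_nat_diff:
  assumes "x \<noteq> y"
  shows "is_unit (of_nat x - of_nat y :: 'a::field_char_0 poly poly)"
proof -
  have "is_unit [:[:of_nat x - of_nat y :: 'a:]:]"
    using assms by (simp add: is_unit_const_poly_iff dvd_field_iff)
  moreover have "(of_nat x - of_nat y :: 'a poly poly) = [:[:of_nat x - of_nat y:]:]"
    by (simp add: of_nat_poly)
  ultimately show ?thesis
    by simp
qed

lemma const_if_pderiv_pderiv_chi_zero: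
  fixes u :: "'a::{idom, ring_char_0} poly poly"
  assumes "pderiv u = 0" and "pderiv_chi u = 0"
  shows "u = [:[:coeff2 u 0 0:]:]"
proof -
  have "u = [:coeff u 0:]"
    using assms(1) by (metis degree_0_id pderiv_eq_0_iff)
  moreover have "pderiv (coeff u 0) = 0"
    using assms(2) by (metis coeff_pderiv_chi coeff_0)
  then have "coeff u 0 = [:coeff (coeff u 0) 0:]"
    by (metis degree_0_id pderiv_eq_0_iff)
  ultimately show ?thesis
    by (simp add: coeff2_def)
qed

lemma logderiv_exponents_eq:
  fixes g u :: "complex poly poly"
  assumes xi: "of_nat a * g * pderiv u + of_nat a * of_nat k * u * pderiv g
             = of_nat b * of_nat m * u * pderiv g"
    and "prime_elem g" and "\<not> g dvd u" and "degree g \<noteq> 0"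
  shows "a * k = b * m"
proof (rule ccontr)
  assume "a * k \<noteq> b * m"
  have "(of_nat (b * m) - of_nat (a * k)) * (u * pderiv g) = g * (of_nat a * pderiv u)"
    using xi by (simp add: algebra_simps)
  then have "g dvd (u * pderiv g) * (of_nat (b * m) - of_nat (a * k))"
    by (metis dvd_triv_left mult.commute)
  then have "g dvd u * pderiv g"
    using is_unit_of_nat_diff \<open>a * k \<noteq> b * m\<close> by (metis dvd_mult_unit_iff)
  then have "g dvd pderiv g"
    using \<open>prime_elem g\<close> \<open>\<not> g dvd u\<close> prime_elem_dvd_mult_iff by blast
  with \<open>degree g \<noteq> 0\<close> show False
    by simp
qed

lemma homogeneous_poisson_commuting_power_of_irreducible:
  fixes f h g :: "complex poly poly"
  assumes euler_f: "of_nat p * (poly_chi * pderiv_chi f) + of_nat q * (poly_xi * pderiv f) = of_nat a * f"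
    and euler_h: "of_nat p * (poly_chi * pderiv_chi h) + of_nat q * (poly_xi * pderiv h) = of_nat b * h"
    and poisson: "pderiv f * pderiv_chi h = pderiv_chi f * pderiv h"
    and "a > 0" and f: "f = g ^ m" and "degree f > 0" and "irreducible g" and "h \<noteq> 0"
  shows "\<exists>c k. c \<noteq> 0 \<and> h = smult [:c:] (g ^ k)"
proof -
  have "g \<noteq> 0" and "\<not> is_unit g"
    using \<open>irreducible g\<close> by (auto simp: irreducible_def)
  have "prime_elem g"
    using \<open>irreducible g\<close> by (simp add: prime_elem_iff_irreducible)
  have "degree g \<noteq> 0"
    using \<open>degree f > 0\<close> \<open>g \<noteq> 0\<close> by (auto simp: f degree_power_eq)
  obtain u where h: "h = g ^ multiplicity g h * u" and "\<not> g dvd u"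
    using multiplicity_decompose'[OF \<open>h \<noteq> 0\<close> \<open>\<not> is_unit g\<close>] by metis
  define k where "k = multiplicity g h"
  note proportional = euler_poisson_proportional[OF euler_f euler_h poisson, unfolded f]
  have leibniz_xi: "pderiv (x * y) = pderiv x * y + x * pderiv y" for x y :: "complex poly poly"
    by (simp add: pderiv_mult algebra_simps)
  have xi: "of_nat a * g * pderiv u + of_nat a * of_nat k * u * pderiv g
          = of_nat b * of_nat m * u * pderiv g"
    using derivation_proportional_power[OF leibniz_xi proportional(2) h[folded k_def] \<open>g \<noteq> 0\<close>] .
  have chi: "of_nat a * g * pderiv_chi u + of_nat a * of_nat k * u * pderiv_chi g
           = of_nat b * of_nat m * u * pderiv_chi g"
    using derivation_proportional_power[OF pderiv_chi_mult proportional(1) h[folded k_def] \<open>g \<noteq> 0\<close>] .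
  have "a * k = b * m"
    using xi \<open>prime_elem g\<close> \<open>\<not> g dvd u\<close> \<open>degree g \<noteq> 0\<close> by (rule logderiv_exponents_eq)
  then have "of_nat a * of_nat k = (of_nat b * of_nat m :: complex poly poly)"
    by (metis of_nat_mult)
  moreover have "of_nat a \<noteq> (0 :: complex poly poly)"
    using \<open>a > 0\<close> by simp
  ultimately have "pderiv u = 0" and "pderiv_chi u = 0"
    using xi chi \<open>g \<noteq> 0\<close> by (simp_all add: algebra_simps)
  then have "u = [:[:coeff2 u 0 0:]:]"
    by (rule const_if_pderiv_pderiv_chi_zero)
  then have "h = g ^ k * [:[:coeff2 u 0 0:]:]"
    using h k_def by metis
  then have "h = smult [:coeff2 u 0 0:] (g ^ k)"
    by simp
  moreover have "coeff2 u 0 0 \<noteq> 0"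
    using \<open>h \<noteq> 0\<close> calculation by auto
  ultimately show ?thesis
    by blast
qed

lemma symbol_ne_zero:
  assumes "is_weyl M" and "M \<noteq> (\<lambda>_. 0)"
  shows "symbol p q M \<noteq> 0"
proof -
  obtain ij where "M ij \<noteq> 0"
    using assms(2) by blast
  then have "newton M \<noteq> {}"
    unfolding newton_def by blast
  then have "delta p q M \<in> Lam p q ` newton M"
    using assms(1) unfolding delta_def is_weyl_def by (intro Max_in) auto
  then obtain i j where "(i, j) \<in> newton M" "Lam p q (i, j) = delta p q M"
    by auto
  then have "coeff2 (symbol p q M) i j \<noteq> 0"
    by (simp add: coeff2_symbol[OF assms(1)] newton_def)
  then show ?thesis
    by (auto simp: coeff2_def)
qed

lemma commuting_symbol_power_of_irreducible:
  assumes wL: "is_weyl L" and "L (0, n) = 1" and "n > 0" and "q > 0"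
    and delta_L: "delta p q L = Lam p q (0, n)"
    and wM: "is_weyl M" and comm: "weyl_mult L M = weyl_mult M L" and "M \<noteq> (\<lambda>_. 0)"
    and "irreducible g" and "symbol p q L = g ^ m"
  shows "\<exists>c k. c \<noteq> 0 \<and> symbol p q M = smult [:c:] (g ^ k)"
proof -
  have "delta p q L > 0"
    using delta_L \<open>q > 0\<close> \<open>n > 0\<close> by (simp add: Lam_def)
  have "coeff2 (symbol p q L) 0 n = 1"
    using coeff2_symbol[OF wL, of p q 0 n] delta_L \<open>L (0, n) = 1\<close> by simp
  then have "n \<le> degree (symbol p q L)"
    by (intro le_degree) (auto simp: coeff2_def)
  with \<open>n > 0\<close> have "degree (symbol p q L) > 0"
    by linarith
  show ?thesis
    using \<open>q > 0\<close> by (intro homogeneous_poisson_commuting_power_of_irreducible[OF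
        symbol_euler[OF wL] symbol_euler[OF wM] commuting_symbols_poisson_bracket[OF wL wM _ comm]
        \<open>delta p q L > 0\<close> \<open>symbol p q L = g ^ m\<close> \<open>degree (symbol p q L) > 0\<close>
        \<open>irreducible g\<close> symbol_ne_zero[OF wM \<open>M \<noteq> (\<lambda>_. 0)\<close>]]) simp
qed

section \<open>The degenerate filtration q = 0\<close>

definition lift_poly :: "'a::zero poly \<Rightarrow> 'a poly poly" where
  "lift_poly x = map_poly (\<lambda>c. [:c:]) x"

lemma coeff_lift_poly [simp]: "coeff (lift_poly x) n = [:coeff x n:]"
  by (simp add: lift_poly_def coeff_map_poly)

lemma lift_poly_mult: "lift_poly (x * y) = lift_poly x * lift_poly (y :: 'a::comm_semiring_1 poly)"
proof -
  have const_sum: "[:sum f A:] = (\<Sum>x\<in>A. [:f x:])" for f :: "nat \<Rightarrow> 'a" and A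
  proof (induction A rule: infinite_finite_induct)
    case (insert x F)
    have "[:f x + sum f F:] = [:f x:] + [:sum f F:]"
      by (simp add: add_pCons)
    with insert show ?case
      by simp
  qed simp_all
  show ?thesis
    by (rule poly_eqI) (simp add: coeff_mult const_sum mult.commute)
qed

lemma lift_poly_const: "lift_poly [:c:] = [:[:c:]:]"
  by (rule poly_eqI) (simp add: coeff_pCons split: nat.split)

lemma coeff2_pderiv_chi: "coeff2 (pderiv_chi F) i j = of_nat (Suc i) * coeff2 F (Suc i) j"
  by (simp add: coeff2_def coeff_pderiv_chi coeff_pderiv)

lemma coeff2_pderiv: "coeff2 (pderiv F) i j = of_nat (Suc j) * coeff2 F i (Suc j)"
  by (simp add: coeff2_def coeff_pderiv of_nat_mult_conv_smult del: of_nat_Suc)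

lemma coeff2_linear_mult:
  "coeff2 ([:[:c:], 1:] * F) 0 j = c * coeff2 F 0 j + (if j = 0 then 0 else coeff2 F 0 (j - 1))"
  by (cases j) (simp_all add: coeff2_def)

lemma pderiv_chi_eq_0_lift_poly:
  fixes g :: "'a::{idom, ring_char_0} poly poly"
  assumes "pderiv_chi g = 0"
  shows "g = lift_poly (map_poly (\<lambda>c. coeff c 0) g)"
proof (rule poly_eqI)
  fix j
  have "pderiv (coeff g j) = 0"
    using assms by (metis coeff_pderiv_chi coeff_0)
  then have "coeff g j = [:coeff (coeff g j) 0:]"
    by (metis degree_0_id pderiv_eq_0_iff)
  then show "coeff g j = coeff (lift_poly (map_poly (\<lambda>c. coeff c 0) g)) j"
    by (simp add: coeff_map_poly)
qed

text \<open>Such a g is linear in xi; the conclusion records this as (xi - z) g' = g.\<close>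

lemma irreducible_pderiv_chi_zero_linear:
  fixes g :: "complex poly poly"
  assumes irr: "irreducible g" and "pderiv_chi g = 0"
  obtains z where "[:[:-z:], 1:] * pderiv g = g"
proof -
  have "g \<noteq> 0" and "\<not> is_unit g"
    using irr by (auto simp: irreducible_def)
  define g0 where "g0 = map_poly (\<lambda>c. coeff c 0) g"
  have g: "g = lift_poly g0"
    unfolding g0_def using \<open>pderiv_chi g = 0\<close> by (rule pderiv_chi_eq_0_lift_poly)
  have "degree g0 \<noteq> 0"
  proof
    assume "degree g0 = 0"
    then have "g0 = [:coeff g0 0:]"
      by (metis degree_0_id)
    then have "g = [:[:coeff g0 0:]:]"
      unfolding g by (metis lift_poly_const)
    with \<open>g \<noteq> 0\<close> \<open>\<not> is_unit g\<close> show False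
      by (simp add: is_unit_const_poly_iff dvd_field_iff)
  qed
  then have "\<not> constant (poly g0)"
    by (simp add: constant_degree)
  then obtain z where "poly g0 z = 0"
    using fundamental_theorem_of_algebra by blast
  then have "[:-z, 1:] dvd g0"
    by (simp add: poly_eq_0_iff_dvd)
  then obtain s where s: "g0 = [:-z, 1:] * s"
    by (rule dvdE)
  have lift_linear: "lift_poly [:-z, 1:] = [:[:-z:], 1:]"
    by (rule poly_eqI) (simp add: coeff_pCons split: nat.split)
  have g_factor: "g = [:[:-z:], 1:] * lift_poly s"
    unfolding g s lift_poly_mult lift_linear ..
  have "\<not> is_unit [:[:-z:], 1 :: complex poly:]"
    by (simp add: is_unit_poly_iff)
  then have "is_unit (lift_poly s)"
    using irreducibleD[OF irr g_factor] by blast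
  then obtain c where c: "lift_poly s = [:c:]"
    using is_unit_poly_iff by blast
  then have "pderiv g = [:c:]"
    by (simp add: g_factor pderiv_mult pderiv_pCons)
  with g_factor c have "[:[:-z:], 1:] * pderiv g = g"
    by simp
  then show ?thesis
    by (rule that)
qed

lemma pderiv_power_linear_ode:
  fixes g R :: "'a::idom poly"
  assumes "R * pderiv g = g"
  shows "R * pderiv (g ^ m) = of_nat m * g ^ m"
proof (cases m)
  case (Suc k)
  have "R * pderiv (g ^ m) = smult (of_nat m) (g ^ k * (R * pderiv g))"
    unfolding Suc pderiv_power_Suc by (simp add: algebra_simps)
  then show ?thesis
    by (simp add: assms Suc of_nat_mult_conv_smult mult.commute del: of_nat_Suc)
qed simp

text \<open>The recursion is (xi - z) f' = m f read off at xi^j for f = sum c_j xi^j; its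
instances at j = n and j = n - 1 give m = n and z = 0.\<close>

lemma linear_ode_coeffs_monomial:
  fixes c :: "nat \<Rightarrow> complex"
  assumes rec: "\<And>j. - z * (of_nat (Suc j) * c (Suc j)) + of_nat j * c j = of_nat m * c j"
    and "c n = 1" and "c (Suc n) = 0" and "c (n - 1) = 0" and "n > 0" and "c b \<noteq> 0"
  shows "b = n"
proof -
  have "of_nat m = (of_nat n :: complex)"
    using rec[of n] \<open>c n = 1\<close> \<open>c (Suc n) = 0\<close> by simp
  moreover have "z = 0"
    using rec[of "n - 1"] \<open>c n = 1\<close> \<open>c (n - 1) = 0\<close> \<open>n > 0\<close> by simp
  ultimately have "of_nat b * c b = of_nat n * c b"
    using rec[of b] by simp
  with \<open>c b \<noteq> 0\<close> show "b = n"
    by simp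
qed

lemma test_filtration_q0_not_power_of_irreducible:
  assumes nf: "normal_form n L" and "n > 0"
    and tf: "test_filtration n L p 0" and irr: "irreducible g"
  shows "symbol p 0 L \<noteq> g ^ m"
proof
  assume f: "symbol p 0 L = g ^ m"
  have wL: "is_weyl L" and "L (0, n) = 1" and "L (0, n - 1) = 0" and "L (0, Suc n) = 0"
    using nf \<open>n > 0\<close> by (auto simp: normal_form_def)
  have "p > 0" and delta_L: "delta p 0 L = 0"
    using tf by (auto simp: test_filtration_def Lam_def)
  obtain ab where "ab \<in> newton L - {(0, n)}" "Lam p 0 ab = 0"
    using tf delta_L unfolding test_filtration_def by auto
  moreover obtain a b where "ab = (a, b)"
    by fastforce
  ultimately have ab: "(a, b) \<in> newton L" "(a, b) \<noteq> (0, n)" "Lam p 0 (a, b) = 0"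
    by auto
  with \<open>p > 0\<close> have "a = 0"
    by (simp add: Lam_def)
  with ab have "L (0, b) \<noteq> 0" and "b \<noteq> n"
    by (auto simp: newton_def)
  have coeff2_f: "coeff2 (g ^ m) i j = (if i = 0 then L (0, j) else 0)" for i j
    using coeff2_symbol[OF wL, of p 0 i j] \<open>p > 0\<close> by (simp flip: f add: delta_L Lam_def)
  have "m \<noteq> 0"
  proof
    assume "m = 0"
    with \<open>n > 0\<close> have "coeff2 (g ^ m) 0 n = 0"
      by (simp add: coeff2_def)
    with coeff2_f[of 0 n] \<open>L (0, n) = 1\<close> show False
      by simp
  qed
  have "g \<noteq> 0"
    using irr by auto
  have "pderiv_chi (g ^ m) = 0"
    by (simp add: poly_eq_iff_coeff2 coeff2_pderiv_chi coeff2_f) (simp add: coeff2_def)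
  then have "of_nat m * g ^ m * pderiv_chi g = 0"
    using derivation_power[OF pderiv_chi_mult, of g m] by simp
  with \<open>m \<noteq> 0\<close> \<open>g \<noteq> 0\<close> have "pderiv_chi g = 0"
    by simp
  then obtain z where z: "[:[:-z:], 1:] * pderiv g = g"
    using irreducible_pderiv_chi_zero_linear[OF irr] by blast
  have ode: "[:[:-z:], 1:] * pderiv (g ^ m) = of_nat m * g ^ m"
    using z by (rule pderiv_power_linear_ode)
  have rec: "- z * (of_nat (Suc j) * L (0, Suc j)) + of_nat j * L (0, j) = of_nat m * L (0, j)" for j
    using arg_cong[OF ode, of "\<lambda>F. coeff2 F 0 j"]
    unfolding coeff2_linear_mult coeff2_of_nat_mult coeff2_pderiv coeff2_f
    by (cases j) simp_all
  from rec \<open>L (0, n) = 1\<close> \<open>L (0, Suc n) = 0\<close> \<open>L (0, n - 1) = 0\<close> \<open>n > 0\<close> \<open>L (0, b) \<noteq> 0\<close>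
  have "b = n"
    by (rule linear_ode_coeffs_monomial)
  with \<open>b \<noteq> n\<close> show False ..
qed

theorem mainTheorem5:
  fixes L :: weyl and n p q :: nat and g :: "complex poly poly"
  assumes "n > 0"
    and "normal_form n L"
    and "L \<noteq> dpow n"
    and "test_filtration n L p q"
    and "irreducible g"
    and "\<exists>m. symbol p q L = g ^ m"
  shows "\<forall>M \<in> centralizer L. M \<noteq> (\<lambda>_. 0) \<longrightarrow>
           (\<exists>c k. c \<noteq> 0 \<and> symbol p q M = smult [:c:] (g ^ k))"
proof (intro ballI impI)
  \<comment> \<open>The hypothesis L \<noteq> dpow n is implied by the test filtration and not needed.\<close>
  fix M
  assume "M \<in> centralizer L" and "M \<noteq> (\<lambda>_. 0)"
  obtain m where f: "symbol p q L = g ^ m"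
    using assms(6) by blast
  have "q > 0"
    using test_filtration_q0_not_power_of_irreducible[OF assms(2,1) _ assms(5)] assms(4) f
    by (cases q) auto
  moreover have "is_weyl L" and "L (0, n) = 1"
    using assms(2) by (auto simp: normal_form_def)
  moreover have "delta p q L = Lam p q (0, n)"
    using assms(4) by (simp add: test_filtration_def)
  ultimately show "\<exists>c k. c \<noteq> 0 \<and> symbol p q M = smult [:c:] (g ^ k)"
    using commuting_symbol_power_of_irreducible \<open>n > 0\<close> \<open>M \<in> centralizer L\<close>
      \<open>M \<noteq> (\<lambda>_. 0)\<close> assms(5) f
    by (auto simp: centralizer_def)
qed

end
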